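(* Let $U=(U_{i,j})$ and $V=(V_{j,k})$ be unitaries on qubits $q_1,\dots,q_n$ (indices in $\{0,1\}^n$). Introduce two copies $q'_1,\dots,q'_n$ and $q''_1,\dots,q''_n$ of the qubit variables, and let $\mu(U)=\sum_{i,j\in\{0,1\}^n}U_{i,j}\,q^{i}q'^{j}$ (an expression over $q_1,\dots,q_n,q'_1,\dots,q'_n$) and $\mu(V)=\sum_{j,k\in\{0,1\}^n}V_{j,k}\,q'^{j}q''^{k}$ (an expression over $q'_1,\dots,q'_n,q''_1,\dots,q''_n$). Then $$\exists q'_1,\dots,q'_n:\ \mu(U)\cdot\mu(V)\ \equiv\ \sum_{i,k\in\{0,1\}^n}(UV)_{i,k}\,q^{i}q''^{k},$$ i.e. the left-hand side is the representation of the matrix product $UV$ over $q_1,\dots,q_n,q''_1,\dots,q''_n$.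
   Context: Qubit variables are treated as Boolean variables. Write $q^0=\overline{q}$, $q^1=q$, and for $i\in\{0,1\}^n$, $q^i=q_1^{i_1}\cdots q_n^{i_n}$ (similarly $q'^j$, $q''^k$). A complex-valued Boolean expression is a formal sum $\sum_r c_rf_r$ with $c_r\in\mathbb{C}$ and $f_r$ classical Boolean expressions, defining the function $F(f)(b)=\sum_{r:f_r(b)=1}c_r$. Product: $(\sum_rc_rf_r)\cdot(\sum_sd_sg_s)=\sum_{r,s}(c_rd_s)(f_r\wedge g_s)$. Existential quantification: $\exists x:\sum_rc_rf_r=\sum_rc_r(\exists x:f_r)$, where for a Boolean expression $h$, $\exists x:h=h_{x=0}\vee h_{x=1}$; several variables are quantified one after another. Two expressions are equivalent ($\equiv$) if they define the same function. *)

theory Defs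
  imports Complex_Main
begin

text \<open>Qubit variables: Q m is q_(m+1), Q1 m is q'_(m+1), Q2 m is q''_(m+1).\<close>
datatype var = Q nat | Q1 nat | Q2 nat

type_synonym assignment = "var \<Rightarrow> bool"
type_synonym bexp = "assignment \<Rightarrow> bool"

text \<open>Complex-valued Boolean expression: a formal sum, i.e. a list of terms c_r f_r.\<close>
type_synonym cbexp = "(complex \<times> bexp) list"

definition sem :: "cbexp \<Rightarrow> assignment \<Rightarrow> complex" where
  "sem e b = (\<Sum>(c, f) \<leftarrow> e. if f b then c else 0)"

definition equiv_cb :: "cbexp \<Rightarrow> cbexp \<Rightarrow> bool" (infix "\<equiv>\<^sub>c" 50) where
  "e1 \<equiv>\<^sub>c e2 \<longleftrightarrow> sem e1 = sem e2"

definition times_cb :: "cbexp \<Rightarrow> cbexp \<Rightarrow> cbexp" where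
  "times_cb e1 e2 = [(c * d, \<lambda>b. f b \<and> g b). (c, f) \<leftarrow> e1, (d, g) \<leftarrow> e2]"

definition ex_bool :: "var \<Rightarrow> bexp \<Rightarrow> bexp" where
  "ex_bool x h = (\<lambda>b. h (b(x := False)) \<or> h (b(x := True)))"

definition ex_cb :: "var \<Rightarrow> cbexp \<Rightarrow> cbexp" where
  "ex_cb x e = map (\<lambda>(c, f). (c, ex_bool x f)) e"

definition exs_cb :: "var list \<Rightarrow> cbexp \<Rightarrow> cbexp" where
  "exs_cb xs e = fold ex_cb xs e"

definition idx :: "nat \<Rightarrow> bool list list" where
  "idx n = List.n_lists n [False, True]"

text \<open>Monomial v^i = v_1^{i_1} ... v_n^{i_n} for a family of variables v.\<close>
definition mono :: "(nat \<Rightarrow> var) \<Rightarrow> bool list \<Rightarrow> bexp" where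
  "mono v i = (\<lambda>b. \<forall>m < length i. b (v m) = i ! m)"

type_synonym mat = "bool list \<Rightarrow> bool list \<Rightarrow> complex"

definition unitary :: "nat \<Rightarrow> mat \<Rightarrow> bool" where
  "unitary n U \<longleftrightarrow>
     (\<forall>i\<in>set (idx n). \<forall>k\<in>set (idx n).
        (\<Sum>j\<leftarrow>idx n. U i j * cnj (U k j)) = (if i = k then 1 else 0)) \<and>
     (\<forall>i\<in>set (idx n). \<forall>k\<in>set (idx n).
        (\<Sum>j\<leftarrow>idx n. cnj (U j i) * U j k) = (if i = k then 1 else 0))"

definition mat_mult :: "nat \<Rightarrow> mat \<Rightarrow> mat \<Rightarrow> mat" where
  "mat_mult n U V = (\<lambda>i k. \<Sum>j\<leftarrow>idx n. U i j * V j k)"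

definition rep :: "nat \<Rightarrow> (nat \<Rightarrow> var) \<Rightarrow> (nat \<Rightarrow> var) \<Rightarrow> mat \<Rightarrow> cbexp" where
  "rep n v w M = [(M i j, \<lambda>b. mono v i b \<and> mono w j b). i \<leftarrow> idx n, j \<leftarrow> idx n]"

end

theory Submission
  imports Defs
begin

text \<open>Multiplying out mu(U) mu(V) gives one term U_ij V_j'k q^i q'^j q'^j' q''^k for all
  i, j, j', k. Quantifying the primed qubits out of such a term leaves q^i q''^k if j = j',
  while for j \<noteq> j' the term is unsatisfiable and stays so. Only the terms with j = j'
  survive, and those with the same i, k contribute sum_j U_ij V_jk = (UV)_ik.\<close>

lemma fold_ex_bool_iff:
  "fold ex_bool xs f b \<longleftrightarrow> (\<exists>c. (\<forall>y. y \<notin> set xs \<longrightarrow> c y = b y) \<and> f c)"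
proof (induction xs arbitrary: f)
  case Nil
  show ?case by auto
next
  case (Cons x xs)
  have "fold ex_bool (x # xs) f b \<longleftrightarrow> (\<exists>c. (\<forall>y. y \<notin> set xs \<longrightarrow> c y = b y) \<and> ex_bool x f c)"
    using Cons.IH by simp
  also have "\<dots> \<longleftrightarrow> (\<exists>c. (\<forall>y. y \<notin> set (x # xs) \<longrightarrow> c y = b y) \<and> f c)"
  proof
    assume "\<exists>c. (\<forall>y. y \<notin> set xs \<longrightarrow> c y = b y) \<and> ex_bool x f c"
    then obtain c v where "\<forall>y. y \<notin> set xs \<longrightarrow> c y = b y" and "f (c(x := v))"
      unfolding ex_bool_def by blast
    then show "\<exists>c. (\<forall>y. y \<notin> set (x # xs) \<longrightarrow> c y = b y) \<and> f c"
      by (intro exI[of _ "c(x := v)"]) simp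
  next
    assume "\<exists>c. (\<forall>y. y \<notin> set (x # xs) \<longrightarrow> c y = b y) \<and> f c"
    then obtain c where agree: "\<forall>y. y \<notin> set (x # xs) \<longrightarrow> c y = b y" and "f c" by blast
    then have "ex_bool x f (c(x := b x))"
      unfolding ex_bool_def by (cases "c x") (simp_all add: fun_upd_idem)
    moreover have "\<forall>y. y \<notin> set xs \<longrightarrow> (c(x := b x)) y = b y"
      using agree by simp
    ultimately show "\<exists>c. (\<forall>y. y \<notin> set xs \<longrightarrow> c y = b y) \<and> ex_bool x f c"
      by blast
  qed
  finally show ?case .
qed

lemma exs_cb_eq_map: "exs_cb xs e = map (\<lambda>(c, f). (c, fold ex_bool xs f)) e"
  unfolding exs_cb_def
  by (induction xs arbitrary: e) (auto simp: ex_cb_def case_prod_unfold)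

lemma sum_list_concat: "sum_list (concat xss) = (\<Sum>xs\<leftarrow>xss. sum_list xs)"
  by (induction xss) auto

lemma sem_exs_cb_times_cb:
  "sem (exs_cb xs (times_cb e1 e2)) b =
     (\<Sum>(c, f)\<leftarrow>e1. \<Sum>(d, g)\<leftarrow>e2. if fold ex_bool xs (\<lambda>b. f b \<and> g b) b then c * d else 0)"
  by (simp add: exs_cb_eq_map times_cb_def sem_def case_prod_unfold map_concat o_def
      sum_list_concat cong: if_cong)

lemma length_idx: "i \<in> set (idx n) \<Longrightarrow> length i = n"
  by (simp add: idx_def set_n_lists)

lemma sum_list_idx: "(\<Sum>i\<leftarrow>idx n. F i) = (\<Sum>i\<in>set (idx n). F i)"
  by (simp add: sum_list_distinct_conv_sum_set idx_def distinct_n_lists)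

lemma sum_list_rep:
  "(\<Sum>(c, f)\<leftarrow>rep n v w M. F c f) =
     (\<Sum>i\<in>set (idx n). \<Sum>j\<in>set (idx n). F (M i j) (\<lambda>b. mono v i b \<and> mono w j b))"
  by (simp add: rep_def sum_list_concat map_concat o_def sum_list_idx)

lemma sem_rep:
  "sem (rep n v w M) b =
     (\<Sum>i\<in>set (idx n). \<Sum>j\<in>set (idx n). if mono v i b \<and> mono w j b then M i j else 0)"
  by (simp add: sem_def sum_list_rep)

lemma mono_cong: "(\<And>m. m < length i \<Longrightarrow> b (v m) = c (v m)) \<Longrightarrow> mono v i b = mono v i c"
  by (simp add: mono_def)

lemma mono_unique:
  assumes "mono v j b" and "mono v j' b" and "length j = length j'"
  shows "j = j'"
  using assms unfolding mono_def by (auto intro: nth_equalityI)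

lemma fold_ex_bool_Q1_mono_iff:
  assumes "length j = n" and "length j' = n"
  shows "fold ex_bool (map Q1 [0..<n])
           (\<lambda>b. mono Q i b \<and> mono Q1 j b \<and> mono Q1 j' b \<and> mono Q2 k b) b
    \<longleftrightarrow> j = j' \<and> mono Q i b \<and> mono Q2 k b"
  (is "?lhs \<longleftrightarrow> _")
proof
  assume ?lhs
  then obtain c where agree: "\<forall>y. y \<notin> set (map Q1 [0..<n]) \<longrightarrow> c y = b y"
    and "mono Q i c" "mono Q1 j c" "mono Q1 j' c" "mono Q2 k c"
    by (auto simp: fold_ex_bool_iff)
  moreover have "mono Q i c = mono Q i b" "mono Q2 k c = mono Q2 k b"
    using agree by (auto intro!: mono_cong)
  ultimately show "j = j' \<and> mono Q i b \<and> mono Q2 k b"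
    using assms mono_unique by metis
next
  assume rhs: "j = j' \<and> mono Q i b \<and> mono Q2 k b"
  define c where "c x = (case x of Q1 m \<Rightarrow> if m < n then j ! m else b x | _ \<Rightarrow> b x)" for x
  have "\<forall>y. y \<notin> set (map Q1 [0..<n]) \<longrightarrow> c y = b y"
    by (auto simp: c_def split: var.split)
  moreover have "mono Q i c \<and> mono Q1 j c \<and> mono Q1 j' c \<and> mono Q2 k c"
    using rhs assms by (simp add: mono_def c_def)
  ultimately show ?lhs
    by (auto simp: fold_ex_bool_iff)
qed

lemma sum_contract:
  fixes U V :: "'i \<Rightarrow> 'i \<Rightarrow> 'a::comm_semiring_1"
  assumes "finite I"
  shows "(\<Sum>i\<in>I. \<Sum>j\<in>I. \<Sum>j'\<in>I. \<Sum>k\<in>I. if j = j' \<and> P i k then U i j * V j' k else 0)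
       = (\<Sum>i\<in>I. \<Sum>k\<in>I. if P i k then \<Sum>j\<in>I. U i j * V j k else 0)"
proof -
  have "(\<Sum>j'\<in>I. \<Sum>k\<in>I. if j = j' \<and> P i k then U i j * V j' k else 0)
      = (\<Sum>k\<in>I. if P i k then U i j * V j k else 0)" if "j \<in> I" for i j
  proof -
    have "(\<Sum>j'\<in>I. \<Sum>k\<in>I. if j = j' \<and> P i k then U i j * V j' k else 0)
        = (\<Sum>j'\<in>I. if j = j' then \<Sum>k\<in>I. if P i k then U i j * V j k else 0 else 0)"
      by (rule sum.cong) auto
    then show ?thesis
      using assms that by (simp add: sum.delta)
  qed
  then have "(\<Sum>i\<in>I. \<Sum>j\<in>I. \<Sum>j'\<in>I. \<Sum>k\<in>I. if j = j' \<and> P i k then U i j * V j' k else 0)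
      = (\<Sum>i\<in>I. \<Sum>j\<in>I. \<Sum>k\<in>I. if P i k then U i j * V j k else 0)"
    by (auto intro!: sum.cong)
  also have "\<dots> = (\<Sum>i\<in>I. \<Sum>k\<in>I. \<Sum>j\<in>I. if P i k then U i j * V j k else 0)"
    by (intro sum.cong refl sum.swap)
  also have "\<dots> = (\<Sum>i\<in>I. \<Sum>k\<in>I. if P i k then \<Sum>j\<in>I. U i j * V j k else 0)"
    by (intro sum.cong refl) simp
  finally show ?thesis .
qed

theorem theorem5:
  fixes n :: nat and U V :: mat
  assumes "unitary n U" and "unitary n V"
  shows "exs_cb (map Q1 [0..<n]) (times_cb (rep n Q Q1 U) (rep n Q1 Q2 V))
           \<equiv>\<^sub>c rep n Q Q2 (mat_mult n U V)"
  unfolding equiv_cb_def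
proof
  fix b
  let ?I = "set (idx n)" and ?P = "\<lambda>i k. mono Q i b \<and> mono Q2 k b"
  have "sem (exs_cb (map Q1 [0..<n]) (times_cb (rep n Q Q1 U) (rep n Q1 Q2 V))) b
      = (\<Sum>i\<in>?I. \<Sum>j\<in>?I. \<Sum>j'\<in>?I. \<Sum>k\<in>?I. if j = j' \<and> ?P i k then U i j * V j' k else 0)"
    by (simp add: sem_exs_cb_times_cb sum_list_rep fold_ex_bool_Q1_mono_iff length_idx
        cong: sum.cong)
  also have "\<dots> = (\<Sum>i\<in>?I. \<Sum>k\<in>?I. if ?P i k then \<Sum>j\<in>?I. U i j * V j k else 0)"
    by (rule sum_contract) simp
  also have "\<dots> = sem (rep n Q Q2 (mat_mult n U V)) b"
    by (simp add: sem_rep mat_mult_def sum_list_idx)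
  finally show "sem (exs_cb (map Q1 [0..<n]) (times_cb (rep n Q Q1 U) (rep n Q1 Q2 V))) b
      = sem (rep n Q Q2 (mat_mult n U V)) b" .
qed

end
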